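(* Fix $x\in\mathbb X$ and $\Lambda\Subset\mathbb X\setminus\{x\}$, a total order $\preceq$ on $\mathbf F(x)$, a set $\mathbf E\subset\mathbf F(x)$ with $\mathbf E\supset\{X\in\mathbf F(x)\mid W(X)\neq1,\ X\setminus\{x\}\subset\Lambda\}$, and for each $X\in\mathbf F(x)$ a total order (also denoted $\preceq$) on $X'$, with $X'_{\prec x'}=\{x''\in X'\mid x''\prec x'\}$ for $x'\in X'$. Suppose that $Z(\Lambda)\neq0$ and, unless $z(x)W(x)=0$, assume also that \[ Z_X(\Lambda\setminus\{x'\}\mid X'_{\prec x'})\neq0\quad\text{and}\quad \widehat z_X(x',\Lambda\setminus\{x'\}\mid X'_{\prec x'})\neq-1 \] for all $X\in\mathbf E$ and $x'\in X'$. Then \[ \widehat z(x,\Lambda)=z(x)\prod_{X\in\mathbf F(x):\,X'\subset\Lambda}\left(1+(W(X)-1)\prod_{x'\in X'}\frac{\widehat z_X(x',\Lambda\setminus\{x'\}\mid X'_{\prec x'})}{1+\widehat z_X(x',\Lambda\setminus\{x'\}\mid X'_{\prec x'})}\right). \]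
   Context: $\mathbb X$ is a finite or countably infinite set, $X\Subset\mathbb X$ means finite subset, $\mathbf F$ is the set of finite subsets of $\mathbb X$. Fix $z:\mathbb X\to\mathbb C$, $W:\mathbf F\to\mathbb C$; $f^X=\prod_{y\in X}f(y)$, $W(x)=W(\{x\})$; singletons $\{x\}$ are written $x$ inside arguments. For an interaction $V:\mathbf F\to\mathbb C$, the conditional interaction is $V(X\mid B)=\prod_{C\subset B}V(X\cup C)$ if $X\cap B=\varnothing$, $V(X\mid B)=0$ if $X=\{y\}$ with $y\in B$, and $V(X\mid B)=1$ otherwise; the Boltzmann factor is $\kappa(X\mid B)=\prod_{\varnothing\neq S\subset X}V(S\mid B)$; partition functions are $Z(X,\Lambda\mid B)=\sum_{Y\subset\Lambda\setminus X}z^{X\cup Y}\kappa(X\cup Y\mid B)$, $Z(\Lambda\mid B)=Z(\varnothing,\Lambda\mid B)$, with $B$ omitted when $B=\varnothing$; correlations $R(X,\Lambda\mid B)=Z(X,\Lambda\mid B)/Z(\Lambda\mid B)$ when the denominator is nonzero, and effective activities $\widehat z(y,\Lambda\mid B)=R(\{y\},\Lambda\mid B)$ for $y\notin\Lambda$. Unadorned $\kappa,Z,R,\widehat z$ refer to $V=W$. Let $\mathbf F(x)=\{X\Subset\mathbb X\mid x\in X\}$ and $X'=X\setminus\{x\}$. Given the total order $\preceq$ on $\mathbf F(x)$ (strict part $\prec$) and $X\in\mathbf F(x)$, define $W_X:\mathbf F\to\mathbb C$ by $W_X(Y)=W(Y)W(\{x\}\cup Y)$ if $x\notin Y$ and $\{x\}\cup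 Y\prec X$; $W_X(Y)=1$ if $x\in Y$ and $Y\neq X$; $W_X(Y)=W(Y)$ otherwise. Quantities built from $V=W_X$ are written $\kappa_X,Z_X,R_X,\widehat z_X$. Convention: a product is set equal to $0$ if at least one factor is well defined and equals $0$, even if other factors are ill-defined. *)

theory Defs
  imports Complex_Main "HOL-Library.Countable"
begin

definition Fx :: "'a \<Rightarrow> 'a set set" where
  "Fx x = {X. finite X \<and> x \<in> X}"

definition cond_int :: "('a set \<Rightarrow> complex) \<Rightarrow> 'a set \<Rightarrow> 'a set \<Rightarrow> complex" where
  "cond_int V X B =
     (if X \<inter> B = {} then (\<Prod>C\<in>Pow B. V (X \<union> C))
      else if (\<exists>y\<in>B. X = {y}) then 0 else 1)"

definition boltz :: "('a set \<Rightarrow> complex) \<Rightarrow> 'a set \<Rightarrow> 'a set \<Rightarrow> complex" where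
  "boltz V X B = (\<Prod>S\<in>Pow X - {{}}. cond_int V S B)"

definition pfX :: "('a set \<Rightarrow> complex) \<Rightarrow> ('a \<Rightarrow> complex) \<Rightarrow> 'a set \<Rightarrow> 'a set \<Rightarrow> 'a set \<Rightarrow> complex" where
  "pfX V z X \<Lambda> B = (\<Sum>Y\<in>Pow (\<Lambda> - X). prod z (X \<union> Y) * boltz V (X \<union> Y) B)"

definition pf :: "('a set \<Rightarrow> complex) \<Rightarrow> ('a \<Rightarrow> complex) \<Rightarrow> 'a set \<Rightarrow> 'a set \<Rightarrow> complex" where
  "pf V z \<Lambda> B = pfX V z {} \<Lambda> B"

text \<open>Correlation R(X, Lambda | B) (HOL division: value 0 if denominator is 0).\<close>
definition corr :: "('a set \<Rightarrow> complex) \<Rightarrow> ('a \<Rightarrow> complex) \<Rightarrow> 'a set \<Rightarrow> 'a set \<Rightarrow> 'a set \<Rightarrow> complex" where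
  "corr V z X \<Lambda> B = pfX V z X \<Lambda> B / pf V z \<Lambda> B"

definition eff :: "('a set \<Rightarrow> complex) \<Rightarrow> ('a \<Rightarrow> complex) \<Rightarrow> 'a \<Rightarrow> 'a set \<Rightarrow> 'a set \<Rightarrow> complex" where
  "eff V z y \<Lambda> B = corr V z {y} \<Lambda> B"

definition WX :: "('a set \<Rightarrow> complex) \<Rightarrow> 'a set rel \<Rightarrow> 'a \<Rightarrow> 'a set \<Rightarrow> 'a set \<Rightarrow> complex" where
  "WX W r x X Y =
     (if x \<notin> Y \<and> (insert x Y, X) \<in> r \<and> insert x Y \<noteq> X then W Y * W (insert x Y)
      else if x \<in> Y \<and> Y \<noteq> X then 1
      else W Y)"

definition below :: "'a rel \<Rightarrow> 'a set \<Rightarrow> 'a \<Rightarrow> 'a set" where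
  "below s A a = {b \<in> A. (b, a) \<in> s \<and> b \<noteq> a}"

end

(* Freezing a particle at x multiplies the weight of a configuration Y \<subseteq> \<Lambda> by z(x) W(x) and
   by W(X) for every X \<in> F(x) with {} \<noteq> X' \<subseteq> Y.  Switching these cluster interactions on one
   at a time, in the order \<preceq>, turns Z(\<Lambda>) into Z({x}, \<Lambda>) / (z(x) W(x)).  The interactions
   switched on before X are exactly those encoded in W_X, so switching on X multiplies the
   current partition function Z_X(\<Lambda>) by 1 + (W(X) - 1) R_X(X', \<Lambda>).  Adding the points of X'
   one at a time in their order factorises R_X(X', \<Lambda>): with B = X'_{\<prec>x'} already present,
   the point x' contributes Z({x'}, \<Lambda> | B) / Z(\<Lambda> | B) = \<zeta>/(1 + \<zeta>), \<zeta> = zhat_X(x', \<Lambda> - {x'} | B). *)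

theory Submission
  imports Defs
begin

lemma boltz_empty: "boltz V Y {} = (\<Prod>S\<in>Pow Y - {{}}. V S)"
  by (simp add: boltz_def cond_int_def)

lemma boltz_eq_0_if_mem:
  assumes "finite Y" "y \<in> Y" "y \<in> B"
  shows "boltz V Y B = 0"
proof -
  have "cond_int V {y} B = 0" using assms(3) by (auto simp: cond_int_def)
  then show ?thesis unfolding boltz_def using assms(1,2) by (intro prod_zero) auto
qed

lemma boltz_union_cond:
  assumes "finite B" "finite T" "T \<inter> B = {}"
  shows "boltz V B {} * boltz V T B = boltz V (B \<union> T) {}"
proof -
  have bij: "bij_betw (\<lambda>(S, C). S \<union> C) ((Pow T - {{}}) \<times> Pow B) {U \<in> Pow (B \<union> T). U \<inter> T \<noteq> {}}"
    by (rule bij_betw_byWitness[where f' = "\<lambda>U. (U \<inter> T, U \<inter> B)"]) (use assms(3) in auto)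
  have "boltz V T B = (\<Prod>S\<in>Pow T - {{}}. \<Prod>C\<in>Pow B. V (S \<union> C))"
    unfolding boltz_def by (rule prod.cong) (use assms(3) in \<open>auto simp: cond_int_def\<close>)
  also have "\<dots> = (\<Prod>U\<in>{U \<in> Pow (B \<union> T). U \<inter> T \<noteq> {}}. V U)"
    using prod.reindex_bij_betw[OF bij, of V] by (simp add: prod.cartesian_product case_prod_beta)
  finally have T: "boltz V T B = \<dots>" .
  have "Pow (B \<union> T) - {{}} = (Pow B - {{}}) \<union> {U \<in> Pow (B \<union> T). U \<inter> T \<noteq> {}}"
    by auto
  moreover have "(Pow B - {{}}) \<inter> {U \<in> Pow (B \<union> T). U \<inter> T \<noteq> {}} = {}"
    using assms(3) by auto
  ultimately show ?thesis
    unfolding T boltz_empty using assms(1,2) by (simp add: prod.union_disjoint)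
qed

lemma pfX_eq_sum_supsets:
  assumes "A \<subseteq> \<Lambda>"
  shows "pfX V z A \<Lambda> B = (\<Sum>Y\<in>{Y \<in> Pow \<Lambda>. A \<subseteq> Y}. prod z Y * boltz V Y B)"
proof -
  have "bij_betw (\<lambda>Y. A \<union> Y) (Pow (\<Lambda> - A)) {Y \<in> Pow \<Lambda>. A \<subseteq> Y}"
    by (rule bij_betw_byWitness[where f' = "\<lambda>Y. Y - A"]) (use assms in auto)
  then show ?thesis
    unfolding pfX_def by (rule sum.reindex_bij_betw)
qed

lemma pfX_union_cond:
  assumes "finite \<Lambda>" "finite C" "B \<subseteq> \<Lambda>" "B \<inter> C = {}"
  shows "prod z B * boltz V B {} * pfX V z C \<Lambda> B = pfX V z (B \<union> C) \<Lambda> {}"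
proof -
  have fin: "finite B" "finite (\<Lambda> - C)" using assms(1,3) finite_subset by auto
  have "pfX V z C \<Lambda> B = (\<Sum>Y\<in>Pow (\<Lambda> - (B \<union> C)). prod z (C \<union> Y) * boltz V (C \<union> Y) B)"
    unfolding pfX_def
  proof (rule sum.mono_neutral_right)
    show "\<forall>Y\<in>Pow (\<Lambda> - C) - Pow (\<Lambda> - (B \<union> C)). prod z (C \<union> Y) * boltz V (C \<union> Y) B = 0"
      using assms(1,2) by (auto intro!: boltz_eq_0_if_mem intro: finite_subset)
  qed (use fin in auto)
  also have "prod z B * boltz V B {} * \<dots> =
      (\<Sum>Y\<in>Pow (\<Lambda> - (B \<union> C)). prod z (B \<union> (C \<union> Y)) * boltz V (B \<union> (C \<union> Y)) {})"
    unfolding sum_distrib_left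
  proof (rule sum.cong[OF refl])
    fix Y assume "Y \<in> Pow (\<Lambda> - (B \<union> C))"
    then have "finite (C \<union> Y)" "B \<inter> (C \<union> Y) = {}"
      using assms by (auto intro: finite_subset)
    then show "prod z B * boltz V B {} * (prod z (C \<union> Y) * boltz V (C \<union> Y) B) =
        prod z (B \<union> (C \<union> Y)) * boltz V (B \<union> (C \<union> Y)) {}"
      using fin(1) boltz_union_cond[of B "C \<union> Y" V]
      by (simp add: prod.union_disjoint Int_commute)
  qed
  also have "\<dots> = pfX V z (B \<union> C) \<Lambda> {}"
    by (simp add: pfX_def Un_assoc)
  finally show ?thesis .
qed

lemma pf_remove:
  assumes "finite \<Lambda>" "a \<in> \<Lambda>"
  shows "pf V z \<Lambda> B = pf V z (\<Lambda> - {a}) B + pfX V z {a} \<Lambda> B"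
proof -
  have "pf V z \<Lambda> B = (\<Sum>Y\<in>Pow \<Lambda>. prod z Y * boltz V Y B)"
    by (simp add: pf_def pfX_def)
  also have "Pow \<Lambda> = Pow (\<Lambda> - {a}) \<union> {Y \<in> Pow \<Lambda>. {a} \<subseteq> Y}" by auto
  also have "(\<Sum>Y\<in>\<dots>. prod z Y * boltz V Y B) =
      (\<Sum>Y\<in>Pow (\<Lambda> - {a}). prod z Y * boltz V Y B) + (\<Sum>Y\<in>{Y \<in> Pow \<Lambda>. {a} \<subseteq> Y}. prod z Y * boltz V Y B)"
    using assms(1) by (intro sum.union_disjoint) auto
  finally show ?thesis
    using assms(2) by (simp add: pf_def pfX_def[of _ _ "{}"] pfX_eq_sum_supsets)
qed

lemma pfX_singleton_eq_eff:
  assumes "finite \<Lambda>" "a \<in> \<Lambda>"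
    and "pf V z (\<Lambda> - {a}) B \<noteq> 0" "eff V z a (\<Lambda> - {a}) B \<noteq> -1"
  shows "pfX V z {a} \<Lambda> B =
    eff V z a (\<Lambda> - {a}) B / (1 + eff V z a (\<Lambda> - {a}) B) * pf V z \<Lambda> B"
proof -
  define N where "N = pfX V z {a} \<Lambda> B"
  define D where "D = pf V z (\<Lambda> - {a}) B"
  have "pfX V z {a} (\<Lambda> - {a}) B = N"
    by (simp add: N_def pfX_def Diff_insert_absorb)
  then have eff: "eff V z a (\<Lambda> - {a}) B = N / D"
    by (simp add: eff_def corr_def D_def)
  have "D \<noteq> 0" using assms(3) by (simp add: D_def)
  moreover have "D + N \<noteq> 0"
  proof
    assume "D + N = 0"
    then have "N / D = -1" using \<open>D \<noteq> 0\<close> by (simp add: eq_neg_iff_add_eq_0[symmetric])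
    then show False using assms(4) eff by simp
  qed
  ultimately show ?thesis
    using pf_remove[OF assms(1,2)] by (simp add: eff N_def D_def field_simps)
qed

lemma linear_order_on_obtains_greatest:
  assumes "finite A" "A \<noteq> {}" "A \<subseteq> U" "linear_order_on U s"
  obtains m where "m \<in> A" "\<forall>b\<in>A. (b, m) \<in> s"
proof -
  have "\<exists>m\<in>A. \<forall>b\<in>A. (b, m) \<in> s"
    using assms(1-3)
  proof (induction A rule: finite_ne_induct)
    case (singleton a)
    then show ?case
      using assms(4) by (simp add: linear_order_on_def partial_order_on_def preorder_on_def refl_on_def)
  next
    case (insert a A)
    then obtain m where m: "m \<in> A" "\<forall>b\<in>A. (b, m) \<in> s" by auto
    have "a \<in> U" "m \<in> U" using insert.prems m(1) by auto
    moreover have "refl_on U s" "trans s" "total_on U s"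
      using assms(4) by (simp_all add: linear_order_on_def partial_order_on_def preorder_on_def)
    ultimately have "(a, a) \<in> s" "(a, m) \<in> s \<or> (m, a) \<in> s" "trans s"
      unfolding refl_on_def total_on_def by metis+
    then show ?case
      using m by (metis insert_iff transD)
  qed
  then show ?thesis using that by blast
qed

lemma telescope_along_linear_order:
  assumes "finite A" "A \<subseteq> U" "linear_order_on U s"
    and "\<And>a. a \<in> A \<Longrightarrow> F (insert a (below s A a)) = g a * F (below s A a)"
  shows "F A = prod g A * F {}"
  using assms(1,2,4)
proof (induction A rule: finite_remove_induct)
  case empty
  then show ?case by simp
next
  case (remove A)
  obtain m where m: "m \<in> A" "\<forall>b\<in>A. (b, m) \<in> s"
    using linear_order_on_obtains_greatest[OF remove.hyps(1,2) remove.prems(1) assms(3)] .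
  have "antisym s"
    using assms(3) by (simp add: linear_order_on_def partial_order_on_def)
  then have below_eq: "below s (A - {m}) a = below s A a" if "a \<in> A - {m}" for a
    using that m by (auto simp: below_def dest: antisymD)
  have "below s A m = A - {m}" "insert m (A - {m}) = A"
    using m by (auto simp: below_def)
  then have "F A = g m * F (A - {m})"
    using remove.prems(2)[OF m(1)] by simp
  also have "F (A - {m}) = prod g (A - {m}) * F {}"
    using remove.IH[OF m(1)] remove.prems below_eq by auto
  finally show ?case
    using remove.hyps(1) m(1) by (simp add: prod.remove mult.assoc)
qed

lemma pfX_eq_pf_prod_eff:
  assumes "finite \<Lambda>" "A \<subseteq> \<Lambda>" "linear_order_on A s"
    and "\<forall>a\<in>A. pf V z (\<Lambda> - {a}) (below s A a) \<noteq> 0 \<and> eff V z a (\<Lambda> - {a}) (below s A a) \<noteq> -1"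
  shows "pfX V z A \<Lambda> {} =
    (\<Prod>a\<in>A. eff V z a (\<Lambda> - {a}) (below s A a) / (1 + eff V z a (\<Lambda> - {a}) (below s A a))) *
    pf V z \<Lambda> {}"
proof -
  have "finite A" using assms(1,2) finite_subset by blast
  then have "pfX V z A \<Lambda> {} =
    (\<Prod>a\<in>A. eff V z a (\<Lambda> - {a}) (below s A a) / (1 + eff V z a (\<Lambda> - {a}) (below s A a))) *
    pfX V z {} \<Lambda> {}"
  proof (rule telescope_along_linear_order[OF _ order_refl assms(3)])
    fix a assume a: "a \<in> A"
    define B where "B = below s A a"
    have B: "finite B" "B \<subseteq> \<Lambda>" "a \<in> \<Lambda> - B"
      using a assms(1,2) by (auto simp: B_def below_def intro: finite_subset)
    have "pfX V z (insert a B) \<Lambda> {} = prod z B * boltz V B {} * pfX V z {a} \<Lambda> B"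
      using pfX_union_cond[of \<Lambda> "{a}" B] assms(1) B by simp
    also have "pfX V z {a} \<Lambda> B = eff V z a (\<Lambda> - {a}) B / (1 + eff V z a (\<Lambda> - {a}) B) * pf V z \<Lambda> B"
      using assms(1,4) a B(3) unfolding B_def by (intro pfX_singleton_eq_eff) auto
    also have "prod z B * boltz V B {} * (\<dots>) =
        eff V z a (\<Lambda> - {a}) B / (1 + eff V z a (\<Lambda> - {a}) B) * pfX V z B \<Lambda> {}"
      using pfX_union_cond[of \<Lambda> "{}" B] assms(1) B by (simp add: pf_def mult.assoc)
    finally show "pfX V z (insert a B) \<Lambda> {} =
        eff V z a (\<Lambda> - {a}) B / (1 + eff V z a (\<Lambda> - {a}) B) * pfX V z B \<Lambda> {}" .
  qed
  then show ?thesis by (simp add: pf_def)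
qed

abbreviation clusters :: "'a \<Rightarrow> 'a set \<Rightarrow> 'a set set" where
  "clusters x Y \<equiv> insert x ` (Pow Y - {{}})"

lemma clusters_restrict:
  assumes "x \<notin> \<Lambda>" "Y \<subseteq> \<Lambda>"
  shows "{X \<in> clusters x \<Lambda>. X - {x} \<subseteq> Y} = clusters x Y"
  using assms by blast

lemma clusters_subset_Fx: "finite \<Lambda> \<Longrightarrow> clusters x \<Lambda> \<subseteq> Fx x"
  by (auto simp: Fx_def intro: finite_subset)

lemma Fx_restrict_eq_insert_clusters:
  assumes "finite \<Lambda>" "x \<notin> \<Lambda>"
  shows "{X \<in> Fx x. X - {x} \<subseteq> \<Lambda>} = insert {x} (clusters x \<Lambda>)"
proof (intro set_eqI iffI)
  fix X assume X: "X \<in> {X \<in> Fx x. X - {x} \<subseteq> \<Lambda>}"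
  then have "X = insert x (X - {x})" by (auto simp: Fx_def)
  moreover have "X - {x} \<in> Pow \<Lambda>" using X by auto
  ultimately show "X \<in> insert {x} (clusters x \<Lambda>)"
    by (metis Diff_iff image_eqI insertCI insert_Diff_single singletonD)
next
  fix X assume "X \<in> insert {x} (clusters x \<Lambda>)"
  then show "X \<in> {X \<in> Fx x. X - {x} \<subseteq> \<Lambda>}"
    using assms by (auto simp: Fx_def intro: finite_subset)
qed

lemma boltz_insert:
  assumes "finite Y" "x \<notin> Y"
  shows "boltz W (insert x Y) {} = W {x} * boltz W Y {} * prod W (clusters x Y)"
proof -
  have "Pow (insert x Y) - {{}} = (Pow Y - {{}}) \<union> insert {x} (clusters x Y)"
    using assms(2) unfolding Pow_insert by auto
  moreover have "{x} \<notin> clusters x Y" "(Pow Y - {{}}) \<inter> insert {x} (clusters x Y) = {}"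
    using assms(2) by auto
  ultimately show ?thesis
    unfolding boltz_empty using assms(1) by (simp add: prod.union_disjoint)
qed

lemma boltz_WX:
  assumes "finite Y" "x \<notin> Y"
  shows "boltz (WX W r x M) Y {} = boltz W Y {} * prod W {X \<in> clusters x Y. (X, M) \<in> r \<and> X \<noteq> M}"
proof -
  let ?w = "\<lambda>X. if (X, M) \<in> r \<and> X \<noteq> M then W X else 1"
  have inj: "inj_on (insert x) (Pow Y - {{}})"
    using assms(2) by (intro inj_onI) (metis Diff_iff Diff_insert_absorb PowD subsetD)
  have "boltz (WX W r x M) Y {} = (\<Prod>S\<in>Pow Y - {{}}. W S * ?w (insert x S))"
    unfolding boltz_empty using assms(2) by (intro prod.cong) (auto simp: WX_def)
  also have "\<dots> = boltz W Y {} * prod ?w (clusters x Y)"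
    by (simp add: prod.distrib boltz_empty prod.reindex[OF inj])
  also have "prod ?w (clusters x Y) = prod W {X \<in> clusters x Y. (X, M) \<in> r \<and> X \<noteq> M}"
    using assms(1) by (simp add: prod.inter_filter)
  finally show ?thesis .
qed

text \<open>The partition function of \<open>\<Lambda>\<close> (restricted to configurations containing \<open>A\<close>) in the
  presence of a frozen particle at \<open>x\<close> that interacts only through the clusters in \<open>S\<close>.
  For \<open>S = clusters x \<Lambda>\<close> this is \<open>Z({x}, \<Lambda>) / (z(x) W(x))\<close>; for the clusters
  preceding \<open>M\<close> it is the partition function of \<open>W\<^sub>M\<close>.\<close>
definition pf_clusters ::
    "('a set \<Rightarrow> complex) \<Rightarrow> ('a \<Rightarrow> complex) \<Rightarrow> 'a \<Rightarrow> 'a set set \<Rightarrow> 'a set \<Rightarrow> 'a set \<Rightarrow> complex" where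
  "pf_clusters W z x S A \<Lambda> =
     (\<Sum>Y\<in>{Y \<in> Pow \<Lambda>. A \<subseteq> Y}. prod z Y * boltz W Y {} * prod W {X \<in> S. X - {x} \<subseteq> Y})"

lemma pf_clusters_empty: "pf_clusters W z x {} {} \<Lambda> = pf W z \<Lambda> {}"
  by (simp add: pf_clusters_def pf_def pfX_def Pow_def)

lemma pf_clusters_insert:
  assumes "finite \<Lambda>" "finite S" "M \<notin> S"
  shows "pf_clusters W z x (insert M S) A \<Lambda> =
    pf_clusters W z x S A \<Lambda> + (W M - 1) * pf_clusters W z x S (A \<union> (M - {x})) \<Lambda>"
proof -
  let ?t = "\<lambda>Y. prod z Y * boltz W Y {} * prod W {X \<in> S. X - {x} \<subseteq> Y}"
  have "pf_clusters W z x (insert M S) A \<Lambda> =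
      (\<Sum>Y\<in>{Y \<in> Pow \<Lambda>. A \<subseteq> Y}. ?t Y + (if M - {x} \<subseteq> Y then (W M - 1) * ?t Y else 0))"
    unfolding pf_clusters_def
  proof (rule sum.cong[OF refl])
    fix Y
    have "{X \<in> insert M S. X - {x} \<subseteq> Y} =
        (if M - {x} \<subseteq> Y then insert M {X \<in> S. X - {x} \<subseteq> Y} else {X \<in> S. X - {x} \<subseteq> Y})"
      by auto
    then show "prod z Y * boltz W Y {} * prod W {X \<in> insert M S. X - {x} \<subseteq> Y} =
        ?t Y + (if M - {x} \<subseteq> Y then (W M - 1) * ?t Y else 0)"
      using assms(2,3) by (simp add: algebra_simps)
  qed
  also have "\<dots> = pf_clusters W z x S A \<Lambda> +
      (\<Sum>Y\<in>{Y \<in> Pow \<Lambda>. A \<subseteq> Y}. if M - {x} \<subseteq> Y then (W M - 1) * ?t Y else 0)"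
    by (simp only: sum.distrib pf_clusters_def)
  also have "(\<Sum>Y\<in>{Y \<in> Pow \<Lambda>. A \<subseteq> Y}. if M - {x} \<subseteq> Y then (W M - 1) * ?t Y else 0) =
      (\<Sum>Y\<in>{Y \<in> {Y \<in> Pow \<Lambda>. A \<subseteq> Y}. M - {x} \<subseteq> Y}. (W M - 1) * ?t Y)"
    by (rule sum.inter_filter[symmetric]) (use assms(1) in simp)
  also have "{Y \<in> {Y \<in> Pow \<Lambda>. A \<subseteq> Y}. M - {x} \<subseteq> Y} = {Y \<in> Pow \<Lambda>. A \<union> (M - {x}) \<subseteq> Y}"
    by auto
  finally show ?thesis by (simp add: pf_clusters_def sum_distrib_left)
qed

lemma pfX_singleton_eq_pf_clusters:
  assumes "finite \<Lambda>" "x \<notin> \<Lambda>"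
  shows "pfX W z {x} \<Lambda> {} = z x * W {x} * pf_clusters W z x (clusters x \<Lambda>) {} \<Lambda>"
proof -
  have "pfX W z {x} \<Lambda> {} = (\<Sum>Y\<in>Pow \<Lambda>. prod z (insert x Y) * boltz W (insert x Y) {})"
    using assms(2) by (simp add: pfX_def)
  also have "\<dots> = (\<Sum>Y\<in>Pow \<Lambda>. z x * W {x} *
      (prod z Y * boltz W Y {} * prod W {X \<in> clusters x \<Lambda>. X - {x} \<subseteq> Y}))"
  proof (rule sum.cong[OF refl])
    fix Y assume "Y \<in> Pow \<Lambda>"
    then have "Y \<subseteq> \<Lambda>" "finite Y" "x \<notin> Y"
      using assms finite_subset by auto
    then show "prod z (insert x Y) * boltz W (insert x Y) {} = z x * W {x} *
        (prod z Y * boltz W Y {} * prod W {X \<in> clusters x \<Lambda>. X - {x} \<subseteq> Y})"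
      by (simp add: boltz_insert clusters_restrict[OF assms(2)] mult_ac)
  qed
  also have "\<dots> = z x * W {x} * pf_clusters W z x (clusters x \<Lambda>) {} \<Lambda>"
    by (simp add: pf_clusters_def sum_distrib_left Pow_def)
  finally show ?thesis .
qed

lemma pfX_WX_eq_pf_clusters:
  assumes "finite \<Lambda>" "x \<notin> \<Lambda>" "A \<subseteq> \<Lambda>"
  shows "pfX (WX W r x M) z A \<Lambda> {} = pf_clusters W z x (below r (clusters x \<Lambda>) M) A \<Lambda>"
  unfolding pfX_eq_sum_supsets[OF assms(3)] pf_clusters_def
proof (rule sum.cong[OF refl])
  fix Y assume "Y \<in> {Y \<in> Pow \<Lambda>. A \<subseteq> Y}"
  then have Y: "Y \<subseteq> \<Lambda>" "finite Y" "x \<notin> Y"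
    using assms finite_subset by auto
  have "{X \<in> below r (clusters x \<Lambda>) M. X - {x} \<subseteq> Y} = {X \<in> clusters x Y. (X, M) \<in> r \<and> X \<noteq> M}"
    using clusters_restrict[OF assms(2) Y(1)] unfolding below_def by blast
  then show "prod z Y * boltz (WX W r x M) Y {} =
      prod z Y * boltz W Y {} * prod W {X \<in> below r (clusters x \<Lambda>) M. X - {x} \<subseteq> Y}"
    using Y(2,3) by (simp add: boltz_WX mult.assoc)
qed

lemma pf_clusters_insert_below:
  assumes "finite \<Lambda>" "x \<notin> \<Lambda>" "M \<in> clusters x \<Lambda>" "linear_order_on (M - {x}) s"
    and "W M \<noteq> 1 \<Longrightarrow> \<forall>a\<in>M - {x}.
           pf (WX W r x M) z (\<Lambda> - {a}) (below s (M - {x}) a) \<noteq> 0 \<and>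
           eff (WX W r x M) z a (\<Lambda> - {a}) (below s (M - {x}) a) \<noteq> -1"
  shows "pf_clusters W z x (insert M (below r (clusters x \<Lambda>) M)) {} \<Lambda> =
    (1 + (W M - 1) *
      (\<Prod>a\<in>M - {x}. eff (WX W r x M) z a (\<Lambda> - {a}) (below s (M - {x}) a) /
                       (1 + eff (WX W r x M) z a (\<Lambda> - {a}) (below s (M - {x}) a)))) *
    pf_clusters W z x (below r (clusters x \<Lambda>) M) {} \<Lambda>"
proof -
  let ?S = "below r (clusters x \<Lambda>) M"
  have "finite ?S" "M \<notin> ?S"
    using assms(1) by (auto simp: below_def)
  then have insert: "pf_clusters W z x (insert M ?S) {} \<Lambda> =
      pf_clusters W z x ?S {} \<Lambda> + (W M - 1) * pf_clusters W z x ?S (M - {x}) \<Lambda>"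
    using pf_clusters_insert[OF assms(1)] by simp
  show ?thesis
  proof (cases "W M = 1")
    case True
    then show ?thesis using insert by simp
  next
    case False
    have "M - {x} \<subseteq> \<Lambda>" using assms(3) by auto
    then have "pf_clusters W z x ?S (M - {x}) \<Lambda> = pfX (WX W r x M) z (M - {x}) \<Lambda> {}"
      using pfX_WX_eq_pf_clusters[OF assms(1,2)] by simp
    also have "\<dots> =
      (\<Prod>a\<in>M - {x}. eff (WX W r x M) z a (\<Lambda> - {a}) (below s (M - {x}) a) /
                       (1 + eff (WX W r x M) z a (\<Lambda> - {a}) (below s (M - {x}) a))) *
      pf (WX W r x M) z \<Lambda> {}"
      using pfX_eq_pf_prod_eff[OF assms(1) \<open>M - {x} \<subseteq> \<Lambda>\<close> assms(4)] assms(5) False by simp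
    also have "pf (WX W r x M) z \<Lambda> {} = pf_clusters W z x ?S {} \<Lambda>"
      using pfX_WX_eq_pf_clusters[OF assms(1,2), of "{}"] by (simp add: pf_def)
    finally show ?thesis
      using insert by (simp add: algebra_simps)
  qed
qed

theorem proposition4p5:
  fixes z :: "'a::countable \<Rightarrow> complex" and W :: "'a set \<Rightarrow> complex"
    and x :: 'a and \<Lambda> :: "'a set" and r :: "'a set rel"
    and E :: "'a set set" and ord :: "'a set \<Rightarrow> 'a rel"
  assumes "finite \<Lambda>" and "x \<notin> \<Lambda>"
    and "linear_order_on (Fx x) r"
    and "E \<subseteq> Fx x"
    and "{X \<in> Fx x. W X \<noteq> 1 \<and> X - {x} \<subseteq> \<Lambda>} \<subseteq> E"
    and "\<forall>X\<in>Fx x. linear_order_on (X - {x}) (ord X)"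
    and "pf W z \<Lambda> {} \<noteq> 0"
    and "z x * W {x} \<noteq> 0 \<Longrightarrow>
           (\<forall>X\<in>E. \<forall>x'\<in>X - {x}.
              pf (WX W r x X) z (\<Lambda> - {x'}) (below (ord X) (X - {x}) x') \<noteq> 0 \<and>
              eff (WX W r x X) z x' (\<Lambda> - {x'}) (below (ord X) (X - {x}) x') \<noteq> -1)"
  shows "eff W z x \<Lambda> {} =
           z x * (\<Prod>X\<in>{X \<in> Fx x. X - {x} \<subseteq> \<Lambda>}.
              1 + (W X - 1) *
                (\<Prod>x'\<in>X - {x}.
                   eff (WX W r x X) z x' (\<Lambda> - {x'}) (below (ord X) (X - {x}) x') /
                   (1 + eff (WX W r x X) z x' (\<Lambda> - {x'}) (below (ord X) (X - {x}) x'))))"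
    (is "_ = z x * prod ?factor _")
proof -
  have "finite (clusters x \<Lambda>)" "{x} \<notin> clusters x \<Lambda>"
    using assms(1,2) by auto
  then have rhs: "prod ?factor {X \<in> Fx x. X - {x} \<subseteq> \<Lambda>} = W {x} * prod ?factor (clusters x \<Lambda>)"
    by (simp add: Fx_restrict_eq_insert_clusters[OF assms(1,2)])
  have lhs: "eff W z x \<Lambda> {} = z x * W {x} * pf_clusters W z x (clusters x \<Lambda>) {} \<Lambda> / pf W z \<Lambda> {}"
    using pfX_singleton_eq_pf_clusters[OF assms(1,2)] by (simp add: eff_def corr_def)
  show ?thesis
  proof (cases "z x * W {x} = 0")
    case True
    show ?thesis by (simp add: lhs rhs True mult.assoc[symmetric])
  next
    case False
    have "pf_clusters W z x (clusters x \<Lambda>) {} \<Lambda> =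
        prod ?factor (clusters x \<Lambda>) * pf_clusters W z x {} {} \<Lambda>"
    proof (rule telescope_along_linear_order[OF _ clusters_subset_Fx[OF assms(1)] assms(3)])
      fix M assume M: "M \<in> clusters x \<Lambda>"
      then have "M \<in> Fx x" "W M \<noteq> 1 \<Longrightarrow> M \<in> E"
        using assms(5) clusters_subset_Fx[OF assms(1)] by auto
      then show "pf_clusters W z x (insert M (below r (clusters x \<Lambda>) M)) {} \<Lambda> =
          ?factor M * pf_clusters W z x (below r (clusters x \<Lambda>) M) {} \<Lambda>"
        using assms(6,8) False by (intro pf_clusters_insert_below[OF assms(1,2) M]) auto
    qed fact
    then show ?thesis
      using lhs rhs assms(7) by (simp add: pf_clusters_empty)
  qed
qed

end
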